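(* Let $n,m\ge 2$ and $K$ be positive integers, $T=mn$, and consider the one-way fixed effects panel regression model \[ \mathbf{y}=\mathbf{X}\boldsymbol{\beta}+\mathbf{Z}\boldsymbol{\gamma}+\mathbf{u}, \] where $\mathbf{y}\in\mathbb{R}^T$ is the response vector, $\mathbf{X}$ is a known non-stochastic real $(T\times K)$ matrix, $\boldsymbol{\beta}\in\mathbb{R}^K$ and $\boldsymbol{\gamma}\in\mathbb{R}^n$ are unknown parameters, $\mathbf{Z}=\mathbf{I}_n\otimes\mathbf{e}_m$ with $\mathbf{e}_m$ the $(m\times1)$ vector of ones, $E(\mathbf{u})=\mathbf{0}$ and $E(\mathbf{u}\mathbf{u}')=\mathbf{I}_n\otimes\boldsymbol{\Sigma}$ with $\boldsymbol{\Sigma}$ a known symmetric positive definite $(m\times m)$ matrix. Define \[ \mathbf{Q}=\mathbf{Z}\big(\mathbf{Z}'(\mathbf{I}_n\otimes\boldsymbol{\Sigma}^{-1})\mathbf{Z}\big)^{-1}\mathbf{Z}'(\mathbf{I}_n\otimes\boldsymbol{\Sigma}^{-1}),\qquad \mathbf{P}=(\mathbf{I}_n\otimes\boldsymbol{\Sigma}^{-1})(\mathbf{I}_T-\mathbf{Q}), \] $\mathbf{M}_m=\mathbf{I}_m-\mathbf{e}_m\mathbf{e}_m'/m$, $\mathbf{M}=\mathbf{I}_n\otimes\mathbf{M}_m$, and let $(\mathbf{I}_n\otimes\mathbf{M}_m\boldsymbol{\Sigma}\mathbf{M}_m)^{+}$ denote the Moore–Penrose inverse of $\mathbf{I}_n\otimes\mathbf{M}_m\boldsymbol{\Sigma}\mathbf{M}_m$.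 Set $\mathbf{C}_+=\mathbf{X}'\mathbf{M}(\mathbf{I}_n\otimes\mathbf{M}_m\boldsymbol{\Sigma}\mathbf{M}_m)^{+}\mathbf{M}\mathbf{X}$, and assume that $\mathbf{X}'\mathbf{P}\mathbf{X}$ and $\mathbf{C}_+$ are nonsingular. Define \[ \hat{\boldsymbol{\beta}}_{GLS}=(\mathbf{X}'\mathbf{P}\mathbf{X})^{-1}\mathbf{X}'\mathbf{P}\mathbf{y},\qquad \hat{\boldsymbol{\beta}}_{MLS}=\mathbf{C}_+^{-1}\mathbf{X}'\mathbf{M}(\mathbf{I}_n\otimes\mathbf{M}_m\boldsymbol{\Sigma}\mathbf{M}_m)^{+}\mathbf{y}. \] Then $\hat{\boldsymbol{\beta}}_{MLS}=\hat{\boldsymbol{\beta}}_{GLS}$ (for every realization $\mathbf{y}\in\mathbb{R}^T$).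
   Context: $\otimes$ denotes the Kronecker product; $\mathbf{I}_k$ the $k\times k$ identity matrix. The Moore–Penrose inverse $\mathbf{B}^+$ of a matrix $\mathbf{B}$ is the unique matrix satisfying $\mathbf{B}\mathbf{B}^+\mathbf{B}=\mathbf{B}$, $\mathbf{B}^+\mathbf{B}\mathbf{B}^+=\mathbf{B}^+$, and $\mathbf{B}\mathbf{B}^+$, $\mathbf{B}^+\mathbf{B}$ symmetric. $\hat{\boldsymbol{\beta}}_{GLS}$ is the generalized least squares estimator of $\boldsymbol{\beta}$ in the fixed effects model, and $\hat{\boldsymbol{\beta}}_{MLS}$ is the Moore–Penrose inverse least squares estimator of $\boldsymbol{\beta}$ in the within-transformed model $\mathbf{M}\mathbf{y}=\mathbf{M}\mathbf{X}\boldsymbol{\beta}+\mathbf{M}\mathbf{u}$, whose error has singular dispersion $\mathbf{I}_n\otimes\mathbf{M}_m\boldsymbol{\Sigma}\mathbf{M}_m$. *)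

theory Defs
  imports "Jordan_Normal_Form.Matrix"
begin

definition kron :: "'a :: times mat \<Rightarrow> 'a mat \<Rightarrow> 'a mat" where
  "kron A B = mat (dim_row A * dim_row B) (dim_col A * dim_col B)
     (\<lambda>(i,j). A $$ (i div dim_row B, j div dim_col B) * B $$ (i mod dim_row B, j mod dim_col B))"

definition ones_col :: "nat \<Rightarrow> 'a :: {zero,one} mat" where
  "ones_col m = mat m 1 (\<lambda>_. 1)"

text \<open>Inverse of a square matrix (meaningful when the matrix is nonsingular).\<close>
definition mat_inv :: "'a :: semiring_1 mat \<Rightarrow> 'a mat" where
  "mat_inv A = (THE B. B \<in> carrier_mat (dim_row A) (dim_row A) \<and> inverts_mat A B \<and> inverts_mat B A)"

definition is_MP_inverse :: "real mat \<Rightarrow> real mat \<Rightarrow> bool" where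
  "is_MP_inverse A B \<longleftrightarrow> B \<in> carrier_mat (dim_col A) (dim_row A) \<and>
     A * B * A = A \<and> B * A * B = B \<and>
     transpose_mat (A * B) = A * B \<and> transpose_mat (B * A) = B * A"

definition MP_inverse :: "real mat \<Rightarrow> real mat" where
  "MP_inverse A = (THE B. is_MP_inverse A B)"

definition sym_pos_def :: "nat \<Rightarrow> real mat \<Rightarrow> bool" where
  "sym_pos_def m S \<longleftrightarrow> S \<in> carrier_mat m m \<and> transpose_mat S = S \<and>
     (\<forall>x \<in> carrier_vec m. x \<noteq> 0\<^sub>v m \<longrightarrow> x \<bullet> (S *\<^sub>v x) > 0)"

end

(*
  The within transformation M = I_n (x) M_m is the annihilator I - Z (Z'Z)^-1 Z' of the dummy
  design Z = I_n (x) e_m, and P = W (I - Z (Z'WZ)^-1 Z'W), with W = I_n (x) Sigma^-1 the inverse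
  of the error dispersion V, is the GLS weight. Since P Z = 0 and Z'P = 0, one has M P = P = P M,
  and both M V M P and P M V M reduce to M; as M is a symmetric idempotent, P satisfies the four
  Penrose equations for M V M, so D+ = P. Then C+ = X'M P M X = X'P X and X'M D+ = X'P, i.e. the
  two estimators are given by the same formula.
*)
theory Submission
  imports Defs "Jordan_Normal_Form.Determinant"
begin

lemma assoc_mult_mat_dims:
  "dim_col A = dim_row B \<Longrightarrow> dim_col B = dim_row C \<Longrightarrow> A * B * C = A * (B * C)"
  by (rule assoc_mult_mat[of A "dim_row A" "dim_col A" B "dim_col B" C "dim_col C"]) auto

lemma mult_minus_distrib_mat_dims:
  fixes A :: "'a :: ring mat"
  shows "dim_col A = dim_row B \<Longrightarrow> dim_row C = dim_row B \<Longrightarrow> dim_col C = dim_col B \<Longrightarrow>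
    A * (B - C) = A * B - A * C"
  by (rule mult_minus_distrib_mat[of A "dim_row A" "dim_col A" B "dim_col B"]) auto

lemma minus_mult_distrib_mat_dims:
  fixes A :: "'a :: ring mat"
  shows "dim_col A = dim_row C \<Longrightarrow> dim_row B = dim_row A \<Longrightarrow> dim_col B = dim_col A \<Longrightarrow>
    (A - B) * C = A * C - B * C"
  by (rule minus_mult_distrib_mat[of A "dim_row A" "dim_col A" B C "dim_col C"]) auto

lemma transpose_mult_dims:
  fixes A :: "'a :: comm_semiring_0 mat"
  shows "dim_col A = dim_row B \<Longrightarrow> transpose_mat (A * B) = transpose_mat B * transpose_mat A"
  by (rule transpose_mult[of A "dim_row A" "dim_col A" B "dim_col B"]) auto

lemma transpose_minus_dims:
  "dim_row B = dim_row A \<Longrightarrow> dim_col B = dim_col A \<Longrightarrow>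
    transpose_mat (A - B) = transpose_mat A - transpose_mat B"
  by (rule transpose_minus[of A "dim_row A" "dim_col A"]) auto

text \<open>The library rules carry premises \<open>A \<in> carrier_mat nr nc\<close> whose dimensions the
  simplifier cannot instantiate; with ground dimension equations as premises it can discharge them.\<close>

lemmas mat_dims_simps = assoc_mult_mat_dims mult_minus_distrib_mat_dims minus_mult_distrib_mat_dims
  transpose_mult_dims transpose_minus_dims

lemma minus_zero_mat [simp]:
  fixes A :: "'a :: group_add mat"
  shows "dim_row A = nr \<Longrightarrow> dim_col A = nc \<Longrightarrow> A - 0\<^sub>m nr nc = A"
  by (rule eq_matI) auto

section \<open>Kronecker products\<close>

lemma div_mod_less_mult:
  fixes i a b :: nat
  assumes "i < a * b"
  shows "i div b < a" and "i mod b < b"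
proof -
  from assms have "0 < b"
    by (auto intro!: gr0I)
  with assms show "i div b < a" and "i mod b < b"
    by (simp_all add: less_mult_imp_div_less)
qed

lemma sum_lessThan_mult_div_mod:
  fixes q t :: nat
  shows "(\<Sum>k<q * t. f (k div t) (k mod t)) = (\<Sum>a<q. \<Sum>b<t. f a b)"
proof -
  have bound: "a * t + b < q * t" if "a < q" "b < t" for a b
  proof -
    have "a * t + b < Suc a * t"
      using \<open>b < t\<close> by simp
    also have "\<dots> \<le> q * t"
      using \<open>a < q\<close> by (intro mult_le_mono1) simp
    finally show ?thesis .
  qed
  have "(\<Sum>k<q * t. f (k div t) (k mod t)) = (\<Sum>(a, b)\<in>{..<q} \<times> {..<t}. f a b)"
    by (rule sum.reindex_bij_witness[of _ "\<lambda>(a, b). a * t + b" "\<lambda>k. (k div t, k mod t)"])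
      (auto simp: bound dest: div_mod_less_mult)
  also have "\<dots> = (\<Sum>a<q. \<Sum>b<t. f a b)"
    by (rule sum.cartesian_product[symmetric])
  finally show ?thesis .
qed

lemma dim_row_kron [simp]: "dim_row (kron A B) = dim_row A * dim_row B"
  and dim_col_kron [simp]: "dim_col (kron A B) = dim_col A * dim_col B"
  by (simp_all add: kron_def)

lemma kron_carrier_mat:
  "A \<in> carrier_mat p q \<Longrightarrow> B \<in> carrier_mat s t \<Longrightarrow> kron A B \<in> carrier_mat (p * s) (q * t)"
  by (intro carrier_matI) auto

lemma index_kron [simp]:
  "i < dim_row A * dim_row B \<Longrightarrow> j < dim_col A * dim_col B \<Longrightarrow>
    kron A B $$ (i, j) = A $$ (i div dim_row B, j div dim_col B) * B $$ (i mod dim_row B, j mod dim_col B)"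
  by (simp add: kron_def)

lemma kron_mult:
  fixes A B :: "'a :: comm_semiring_0 mat"
  assumes A: "A \<in> carrier_mat p q" and C: "C \<in> carrier_mat q r"
    and B: "B \<in> carrier_mat s t" and D: "D \<in> carrier_mat t u"
  shows "kron A B * kron C D = kron (A * C) (B * D)"
proof (rule eq_matI)
  fix i j assume "i < dim_row (kron (A * C) (B * D))" "j < dim_col (kron (A * C) (B * D))"
  then have ij: "i < p * s" "j < r * u"
    using A B C D by auto
  note bounds = div_mod_less_mult[OF ij(1)] div_mod_less_mult[OF ij(2)]
  have "(kron A B * kron C D) $$ (i, j) =
      (\<Sum>k<q * t. (A $$ (i div s, k div t) * C $$ (k div t, j div u)) *
                   (B $$ (i mod s, k mod t) * D $$ (k mod t, j mod u)))"
    using A B C D ij bounds by (auto simp: scalar_prod_def lessThan_atLeast0 ac_simps intro!: sum.cong)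
  also have "\<dots> = (\<Sum>a<q. A $$ (i div s, a) * C $$ (a, j div u)) *
                   (\<Sum>b<t. B $$ (i mod s, b) * D $$ (b, j mod u))"
    by (simp add: sum_lessThan_mult_div_mod[where f = "\<lambda>a b. A $$ (i div s, a) * C $$ (a, j div u) *
      (B $$ (i mod s, b) * D $$ (b, j mod u))"] sum_product)
  also have "\<dots> = kron (A * C) (B * D) $$ (i, j)"
    using A B C D ij bounds by (simp add: scalar_prod_def lessThan_atLeast0)
  finally show "(kron A B * kron C D) $$ (i, j) = kron (A * C) (B * D) $$ (i, j)" .
qed (use A B C D in auto)

lemma kron_one_mult_kron_one:
  fixes A B :: "'a :: comm_semiring_1 mat"
  assumes "dim_col A = dim_row B"
  shows "kron (1\<^sub>m n) A * kron (1\<^sub>m n) B = kron (1\<^sub>m n) (A * B)"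
proof -
  have "A \<in> carrier_mat (dim_row A) (dim_row B)" and "B \<in> carrier_mat (dim_row B) (dim_col B)"
    using assms by auto
  from kron_mult[OF one_carrier_mat one_carrier_mat this] show ?thesis
    by simp
qed

lemma transpose_kron:
  "transpose_mat (kron A B) = kron (transpose_mat A) (transpose_mat B)"
  by (rule eq_matI) (auto simp: div_mod_less_mult)

lemma kron_minus_right:
  fixes A B C :: "'a :: ring mat"
  assumes "B \<in> carrier_mat s t" and "C \<in> carrier_mat s t"
  shows "kron A (B - C) = kron A B - kron A C"
  by (rule eq_matI) (use assms in \<open>auto simp: right_diff_distrib div_mod_less_mult\<close>)

lemma kron_one_one: "kron (1\<^sub>m n) (1\<^sub>m k) = (1\<^sub>m (n * k) :: 'a :: semiring_1 mat)"
  by (rule eq_matI) (auto simp: div_mod_less_mult, metis div_mult_mod_eq)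

lemma mat_1x1_eq_smult_one: "(A :: 'a :: semiring_1 mat) \<in> carrier_mat 1 1 \<Longrightarrow> A = A $$ (0, 0) \<cdot>\<^sub>m 1\<^sub>m 1"
  by (rule eq_matI) auto

lemma smult_one_mat_inverse:
  assumes "a * b = (1 :: 'a :: comm_semiring_1)"
  shows "(a \<cdot>\<^sub>m 1\<^sub>m k) * (b \<cdot>\<^sub>m 1\<^sub>m k) = 1\<^sub>m k"
proof -
  have "(a \<cdot>\<^sub>m 1\<^sub>m k) * (b \<cdot>\<^sub>m 1\<^sub>m k) = a \<cdot>\<^sub>m (b \<cdot>\<^sub>m 1\<^sub>m k)"
    using mult_smult_assoc_mat[of "1\<^sub>m k" k k "b \<cdot>\<^sub>m 1\<^sub>m k" k a] by simp
  also have "\<dots> = 1\<^sub>m k"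
    by (rule eq_matI) (use assms in auto)
  finally show ?thesis .
qed

lemma mult_smult_one_mult:
  fixes A B :: "'a :: comm_semiring_1 mat"
  assumes "A \<in> carrier_mat k 1" and "B \<in> carrier_mat 1 l"
  shows "A * (a \<cdot>\<^sub>m 1\<^sub>m 1) * B = a \<cdot>\<^sub>m (A * B)"
  by (rule eq_matI) (use assms in \<open>auto simp: scalar_prod_def ac_simps\<close>)

lemma ones_col_inner: "transpose_mat (ones_col k) * ones_col k = (of_nat k :: 'a :: semiring_1) \<cdot>\<^sub>m 1\<^sub>m 1"
  by (rule eq_matI) (auto simp: ones_col_def scalar_prod_def)

lemma quadratic_form_index:
  fixes x A :: "'a :: comm_semiring_0 mat"
  assumes "x \<in> carrier_mat k 1" and "A \<in> carrier_mat k k"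
  shows "(transpose_mat x * A * x) $$ (0, 0) = col x 0 \<bullet> (A *\<^sub>v col x 0)"
  using assms by (simp add: assoc_mult_mat_dims mult_mat_vec_def)

lemma mat_inv_eqI:
  fixes A B :: "'a :: semiring_1 mat"
  assumes A: "A \<in> carrier_mat k k" and B: "B \<in> carrier_mat k k"
    and AB: "A * B = 1\<^sub>m k" and BA: "B * A = 1\<^sub>m k"
  shows "mat_inv A = B"
  unfolding mat_inv_def
proof (rule the_equality)
  fix C assume "C \<in> carrier_mat (dim_row A) (dim_row A) \<and> inverts_mat A C \<and> inverts_mat C A"
  then have C: "C \<in> carrier_mat k k" and CA: "C * A = 1\<^sub>m k"
    using A by (auto simp: inverts_mat_def)
  have "C = (C * A) * B"
    using A B C AB by simp
  then show "C = B"
    using CA B by simp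
qed (use A B AB BA in \<open>auto simp: inverts_mat_def\<close>)

lemma invertible_mat_inv:
  fixes A :: "'a :: semiring_1 mat"
  assumes "invertible_mat A" and A: "A \<in> carrier_mat k k"
  shows "mat_inv A \<in> carrier_mat k k" and "A * mat_inv A = 1\<^sub>m k" and "mat_inv A * A = 1\<^sub>m k"
proof -
  obtain B where AB: "A * B = 1\<^sub>m (dim_row A)" and BA: "B * A = 1\<^sub>m (dim_row B)"
    using assms(1) unfolding invertible_mat_def inverts_mat_def by blast
  have "dim_col B = dim_col (A * B)" and "dim_row B = dim_col (B * A)"
    using BA by simp_all
  then have B: "B \<in> carrier_mat k k"
    using A AB by auto
  then have AB: "A * B = 1\<^sub>m k" and BA: "B * A = 1\<^sub>m k"
    using A AB BA by auto
  show "mat_inv A \<in> carrier_mat k k" and "A * mat_inv A = 1\<^sub>m k" and "mat_inv A * A = 1\<^sub>m k"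
    using mat_inv_eqI[OF A B AB BA] B AB BA by simp_all
qed

lemma kron_one_smult_one_inverse:
  fixes a :: "'a :: field"
  assumes "a \<noteq> 0"
  shows "invertible_mat (kron (1\<^sub>m n) (a \<cdot>\<^sub>m 1\<^sub>m k))"
    and "mat_inv (kron (1\<^sub>m n) (a \<cdot>\<^sub>m 1\<^sub>m k)) = kron (1\<^sub>m n) (inverse a \<cdot>\<^sub>m 1\<^sub>m k)"
proof -
  have carrier: "kron (1\<^sub>m n) (b \<cdot>\<^sub>m 1\<^sub>m k) \<in> carrier_mat (n * k) (n * k)" for b :: 'a
    by (rule kron_carrier_mat) auto
  have "kron (1\<^sub>m n) (b \<cdot>\<^sub>m 1\<^sub>m k) * kron (1\<^sub>m n) (b' \<cdot>\<^sub>m 1\<^sub>m k) = 1\<^sub>m (n * k)"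
    if "b * b' = 1" for b b' :: 'a
    using that by (simp add: kron_one_mult_kron_one smult_one_mat_inverse kron_one_one)
  then have inverse: "kron (1\<^sub>m n) (a \<cdot>\<^sub>m 1\<^sub>m k) * kron (1\<^sub>m n) (inverse a \<cdot>\<^sub>m 1\<^sub>m k) = 1\<^sub>m (n * k)"
    "kron (1\<^sub>m n) (inverse a \<cdot>\<^sub>m 1\<^sub>m k) * kron (1\<^sub>m n) (a \<cdot>\<^sub>m 1\<^sub>m k) = 1\<^sub>m (n * k)"
    using assms by simp_all
  show "invertible_mat (kron (1\<^sub>m n) (a \<cdot>\<^sub>m 1\<^sub>m k))"
    unfolding invertible_mat_def inverts_mat_def using carrier inverse by (auto simp: square_mat.simps)
  show "mat_inv (kron (1\<^sub>m n) (a \<cdot>\<^sub>m 1\<^sub>m k)) = kron (1\<^sub>m n) (inverse a \<cdot>\<^sub>m 1\<^sub>m k)"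
    using mat_inv_eqI[OF carrier carrier inverse] .
qed

lemma sym_pos_def_invertible:
  assumes "sym_pos_def k S"
  shows "invertible_mat S"
proof -
  have S: "S \<in> carrier_mat k k"
    and pos: "\<And>x. x \<in> carrier_vec k \<Longrightarrow> x \<noteq> 0\<^sub>v k \<Longrightarrow> x \<bullet> (S *\<^sub>v x) > 0"
    using assms unfolding sym_pos_def_def by auto
  have "det S \<noteq> 0"
  proof
    assume "det S = 0"
    then obtain v where "v \<in> carrier_vec k" "v \<noteq> 0\<^sub>v k" "S *\<^sub>v v = 0\<^sub>v k"
      using det_0_iff_vec_prod_zero_field[OF S] by blast
    then show False
      using pos[of v] by simp
  qed
  then have "S \<in> Units (ring_mat TYPE(real) k ())"
    by (rule det_non_zero_imp_unit[OF S])
  then show ?thesis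
    using S unfolding Units_def invertible_mat_def inverts_mat_def
    by (auto simp: ring_mat_simps square_mat.simps)
qed

lemma sym_pos_def_mat_inv_pos:
  assumes S: "sym_pos_def k S" and x: "x \<in> carrier_vec k" "x \<noteq> 0\<^sub>v k"
  shows "x \<bullet> (mat_inv S *\<^sub>v x) > 0"
proof -
  have S_carrier: "S \<in> carrier_mat k k"
    and pos: "\<And>x. x \<in> carrier_vec k \<Longrightarrow> x \<noteq> 0\<^sub>v k \<Longrightarrow> x \<bullet> (S *\<^sub>v x) > 0"
    using S unfolding sym_pos_def_def by auto
  note S' = invertible_mat_inv[OF sym_pos_def_invertible[OF S] S_carrier]
  define v where "v = mat_inv S *\<^sub>v x"
  have v: "v \<in> carrier_vec k" and Sv: "S *\<^sub>v v = x"
    unfolding v_def using S_carrier S' x by (auto simp flip: assoc_mult_mat_vec)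
  have "v \<noteq> 0\<^sub>v k"
    using Sv S_carrier x by auto
  then have "v \<bullet> (S *\<^sub>v v) > 0"
    using pos v by blast
  then show ?thesis
    using Sv v x by (simp add: v_def[symmetric] comm_scalar_prod[of x k v])
qed

section \<open>Moore--Penrose inverses\<close>

lemma is_MP_inverse_unique:
  assumes B: "is_MP_inverse A B" and C: "is_MP_inverse A C"
  shows "B = C"
proof -
  have dims: "dim_row B = dim_col A" "dim_col B = dim_row A" "dim_row C = dim_col A" "dim_col C = dim_row A"
    using B C unfolding is_MP_inverse_def by auto
  have ABA: "A * B * A = A" and BAB: "B * A * B = B"
    and AB: "transpose_mat (A * B) = A * B" and BA: "transpose_mat (B * A) = B * A"
    using B unfolding is_MP_inverse_def by auto
  have ACA: "A * C * A = A" and CAC: "C * A * C = C"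
    and AC: "transpose_mat (A * C) = A * C" and CA: "transpose_mat (C * A) = C * A"
    using C unfolding is_MP_inverse_def by auto
  have "A * B = transpose_mat (A * C * A * B)"
    using AB ACA by simp
  also have "\<dots> = transpose_mat (A * B) * transpose_mat (A * C)"
    using dims by (simp add: mat_dims_simps)
  also have "\<dots> = (A * B * A) * C"
    unfolding AB AC using dims by (simp add: mat_dims_simps)
  finally have AB_AC: "A * B = A * C"
    using ABA by simp
  have "B * A = transpose_mat (B * A * C * A)"
    using BA ACA dims by (simp add: mat_dims_simps)
  also have "\<dots> = transpose_mat (C * A) * transpose_mat (B * A)"
    using dims by (simp add: mat_dims_simps)
  also have "\<dots> = C * (A * B * A)"
    unfolding BA CA using dims by (simp add: mat_dims_simps)
  finally have BA_CA: "B * A = C * A"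
    using ABA by simp
  have "B = B * (A * C)"
    using BAB AB_AC dims by (simp add: mat_dims_simps)
  also have "\<dots> = C * A * C"
    using BA_CA dims by (simp flip: assoc_mult_mat_dims)
  finally show ?thesis
    using CAC by simp
qed

lemma MP_inverse_eqI: "is_MP_inverse A B \<Longrightarrow> MP_inverse A = B"
  unfolding MP_inverse_def using is_MP_inverse_unique by blast

section \<open>The annihilator and the GLS weight\<close>

lemma transpose_mat_inv:
  fixes A :: "'a :: field mat"
  assumes "invertible_mat A" and A: "A \<in> carrier_mat k k" and sym: "transpose_mat A = A"
  shows "transpose_mat (mat_inv A) = mat_inv A"
proof -
  note inv = invertible_mat_inv[OF assms(1) A]
  have "A * transpose_mat (mat_inv A) = 1\<^sub>m k" and "transpose_mat (mat_inv A) * A = 1\<^sub>m k"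
    using arg_cong[OF inv(3), of transpose_mat] arg_cong[OF inv(2), of transpose_mat] A inv(1) sym
    by (simp_all add: transpose_mult_dims)
  from mat_inv_eqI[OF A _ this] inv(1) show ?thesis
    by simp
qed

definition annihilator :: "'a :: field mat \<Rightarrow> 'a mat" where
  "annihilator Z = 1\<^sub>m (dim_row Z) - Z * mat_inv (transpose_mat Z * Z) * transpose_mat Z"

definition GLS_weight :: "'a :: field mat \<Rightarrow> 'a mat \<Rightarrow> 'a mat" where
  "GLS_weight W Z =
    W * (1\<^sub>m (dim_row Z) - Z * mat_inv (transpose_mat Z * W * Z) * transpose_mat Z * W)"

context
  fixes T n :: nat and Z :: "'a :: field mat"
  assumes Z: "Z \<in> carrier_mat T n" and gram: "invertible_mat (transpose_mat Z * Z)"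
begin

lemma mat_inv_gram:
  "mat_inv (transpose_mat Z * Z) \<in> carrier_mat n n"
  "mat_inv (transpose_mat Z * Z) * (transpose_mat Z * Z) = 1\<^sub>m n"
  "transpose_mat Z * Z * mat_inv (transpose_mat Z * Z) = 1\<^sub>m n"
  using invertible_mat_inv[OF gram] Z by auto

lemma annihilator_carrier: "annihilator Z \<in> carrier_mat T T"
  unfolding annihilator_def using Z mat_inv_gram by auto

lemma annihilator_mult_self: "annihilator Z * Z = 0\<^sub>m T n"
proof -
  have "annihilator Z * Z = Z - Z * (mat_inv (transpose_mat Z * Z) * (transpose_mat Z * Z))"
    unfolding annihilator_def using Z mat_inv_gram by (simp add: mat_dims_simps)
  then show ?thesis
    using Z mat_inv_gram by simp
qed

lemma transpose_annihilator: "transpose_mat (annihilator Z) = annihilator Z"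
proof -
  have "transpose_mat (mat_inv (transpose_mat Z * Z)) = mat_inv (transpose_mat Z * Z)"
    using Z by (intro transpose_mat_inv[OF gram, of n]) (auto simp: transpose_mult_dims)
  then show ?thesis
    unfolding annihilator_def using Z mat_inv_gram by (simp add: mat_dims_simps)
qed

lemma transpose_mult_annihilator: "transpose_mat Z * annihilator Z = 0\<^sub>m n T"
  using arg_cong[OF annihilator_mult_self, of transpose_mat] Z annihilator_carrier
  by (simp add: transpose_mult_dims transpose_annihilator)

lemma annihilator_mult_eqI:
  assumes "A \<in> carrier_mat T k" and "transpose_mat Z * A = 0\<^sub>m n k"
  shows "annihilator Z * A = A"
proof -
  have "annihilator Z * A = A - Z * mat_inv (transpose_mat Z * Z) * (transpose_mat Z * A)"
    unfolding annihilator_def using assms Z mat_inv_gram by (simp add: mat_dims_simps)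
  then show ?thesis
    using assms Z mat_inv_gram by simp
qed

lemma mult_annihilator_eqI:
  assumes "A \<in> carrier_mat k T" and "A * Z = 0\<^sub>m k n"
  shows "A * annihilator Z = A"
proof -
  have "A * annihilator Z = A - (A * Z) * (mat_inv (transpose_mat Z * Z) * transpose_mat Z)"
    unfolding annihilator_def using assms(1) Z mat_inv_gram(1) by (simp add: mat_dims_simps)
  also have "\<dots> = A"
    unfolding \<open>A * Z = 0\<^sub>m k n\<close> using assms Z mat_inv_gram by simp
  finally show ?thesis .
qed

lemma annihilator_idem: "annihilator Z * annihilator Z = annihilator Z"
  by (rule annihilator_mult_eqI[OF annihilator_carrier transpose_mult_annihilator])

end

context
  fixes T n :: nat and V W Z :: "'a :: field mat"
  assumes V: "V \<in> carrier_mat T T" and W: "W \<in> carrier_mat T T" and VW: "V * W = 1\<^sub>m T"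
    and Z: "Z \<in> carrier_mat T n" and weighted_gram: "invertible_mat (transpose_mat Z * W * Z)"
begin

lemma mat_inv_weighted_gram:
  "mat_inv (transpose_mat Z * W * Z) \<in> carrier_mat n n"
  "mat_inv (transpose_mat Z * W * Z) * (transpose_mat Z * W * Z) = 1\<^sub>m n"
  "transpose_mat Z * W * Z * mat_inv (transpose_mat Z * W * Z) = 1\<^sub>m n"
  using invertible_mat_inv[OF weighted_gram] Z W by auto

lemma GLS_weight_carrier: "GLS_weight W Z \<in> carrier_mat T T"
  unfolding GLS_weight_def using Z W mat_inv_weighted_gram by auto

lemma transpose_mult_GLS_weight: "transpose_mat Z * GLS_weight W Z = 0\<^sub>m n T"
proof -
  have "transpose_mat Z * GLS_weight W Z = transpose_mat Z * W -
      (transpose_mat Z * W * Z * mat_inv (transpose_mat Z * W * Z)) * (transpose_mat Z * W)"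
    unfolding GLS_weight_def using Z W mat_inv_weighted_gram(1) by (simp add: mat_dims_simps)
  also have "\<dots> = 0\<^sub>m n T"
    unfolding mat_inv_weighted_gram(3) using Z W by simp
  finally show ?thesis .
qed

lemma GLS_weight_mult_self: "GLS_weight W Z * Z = 0\<^sub>m T n"
proof -
  have "GLS_weight W Z * Z = W * Z -
      W * Z * (mat_inv (transpose_mat Z * W * Z) * (transpose_mat Z * W * Z))"
    unfolding GLS_weight_def using Z W mat_inv_weighted_gram by (simp add: mat_dims_simps)
  then show ?thesis
    using Z W mat_inv_weighted_gram by simp
qed

lemma mult_GLS_weight:
  "V * GLS_weight W Z = 1\<^sub>m T - Z * mat_inv (transpose_mat Z * W * Z) * transpose_mat Z * W"
proof -
  have "V * GLS_weight W Z =
      (V * W) * (1\<^sub>m T - Z * mat_inv (transpose_mat Z * W * Z) * transpose_mat Z * W)"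
    unfolding GLS_weight_def using V W Z mat_inv_weighted_gram by (simp add: assoc_mult_mat_dims)
  then show ?thesis
    using VW Z W mat_inv_weighted_gram by simp
qed

lemma GLS_weight_mult:
  "GLS_weight W Z * V = 1\<^sub>m T - W * Z * mat_inv (transpose_mat Z * W * Z) * transpose_mat Z"
proof -
  have WV: "W * V = 1\<^sub>m T"
    by (rule mat_mult_left_right_inverse[OF V W VW])
  have "GLS_weight W Z * V =
      W * V - W * Z * mat_inv (transpose_mat Z * W * Z) * transpose_mat Z * (W * V)"
    unfolding GLS_weight_def using V W Z mat_inv_weighted_gram by (simp add: mat_dims_simps)
  then show ?thesis
    using WV Z W mat_inv_weighted_gram by simp
qed

end

lemma GLS_weight_MP_inverse:
  fixes V W Z :: "real mat"
  assumes V: "V \<in> carrier_mat T T" and W: "W \<in> carrier_mat T T" and VW: "V * W = 1\<^sub>m T"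
    and Z: "Z \<in> carrier_mat T n" and gram: "invertible_mat (transpose_mat Z * Z)"
    and weighted_gram: "invertible_mat (transpose_mat Z * W * Z)"
  shows "is_MP_inverse (annihilator Z * V * annihilator Z) (GLS_weight W Z)"
    and "annihilator Z * GLS_weight W Z = GLS_weight W Z"
    and "GLS_weight W Z * annihilator Z = GLS_weight W Z"
proof -
  let ?M = "annihilator Z" and ?P = "GLS_weight W Z"
    and ?R = "mat_inv (transpose_mat Z * W * Z)"
  note M = annihilator_carrier[OF Z gram] and P = GLS_weight_carrier[OF V W VW Z weighted_gram]
    and R = mat_inv_weighted_gram(1)[OF V W VW Z weighted_gram]
  show MP: "?M * ?P = ?P"
    by (rule annihilator_mult_eqI[OF Z gram P transpose_mult_GLS_weight[OF V W VW Z weighted_gram]])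
  show PM: "?P * ?M = ?P"
    by (rule mult_annihilator_eqI[OF Z gram P GLS_weight_mult_self[OF V W VW Z weighted_gram]])
  have MPM: "?M * V * ?M * ?P = ?M"
  proof -
    have "?M * V * ?M * ?P = ?M * (V * ?P)"
      using M V P MP by (simp add: assoc_mult_mat_dims)
    also have "\<dots> = ?M - ?M * Z * ?R * transpose_mat Z * W"
      unfolding mult_GLS_weight[OF V W VW Z weighted_gram] using M Z R W by (simp add: mat_dims_simps)
    finally show ?thesis
      using annihilator_mult_self[OF Z gram] M Z R W by simp
  qed
  have PMVM: "?P * (?M * V * ?M) = ?M"
  proof -
    have "?P * (?M * V * ?M) = (?P * ?M) * V * ?M"
      using M V P by (simp add: assoc_mult_mat_dims)
    also have "\<dots> = ?M - W * Z * ?R * (transpose_mat Z * ?M)"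
      unfolding PM GLS_weight_mult[OF V W VW Z weighted_gram] using M Z R W by (simp add: mat_dims_simps)
    finally show ?thesis
      using transpose_mult_annihilator[OF Z gram] M Z R W by simp
  qed
  have "?M * V * ?M * ?P * (?M * V * ?M) = (?M * ?M) * V * ?M"
    unfolding MPM using M V by (simp add: assoc_mult_mat_dims)
  then show "is_MP_inverse (?M * V * ?M) ?P"
    unfolding is_MP_inverse_def
    using MPM PMVM MP M V P annihilator_idem[OF Z gram] transpose_annihilator[OF Z gram] by auto
qed

section \<open>The one-way fixed effects design\<close>

lemma dummy_annihilator:
  fixes m n :: nat
  assumes "0 < m"
  defines "Z \<equiv> kron (1\<^sub>m n) (ones_col m :: real mat)"
  shows "invertible_mat (transpose_mat Z * Z)"
    and "annihilator Z = kron (1\<^sub>m n) (1\<^sub>m m - (1 / real m) \<cdot>\<^sub>m (ones_col m * transpose_mat (ones_col m)))"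
proof -
  let ?I = "1\<^sub>m n :: real mat" and ?e = "ones_col m :: real mat"
  have e: "?e \<in> carrier_mat m 1" and et: "transpose_mat ?e \<in> carrier_mat 1 m"
    by (simp_all add: ones_col_def)
  have gram: "transpose_mat Z * Z = kron ?I (real m \<cdot>\<^sub>m 1\<^sub>m 1)"
    unfolding Z_def transpose_kron using e by (simp add: kron_one_mult_kron_one ones_col_inner)
  show "invertible_mat (transpose_mat Z * Z)"
    unfolding gram using assms by (simp add: kron_one_smult_one_inverse)
  have "Z * mat_inv (transpose_mat Z * Z) * transpose_mat Z = kron ?I (?e * ((1 / real m) \<cdot>\<^sub>m 1\<^sub>m 1) * transpose_mat ?e)"
    unfolding gram using assms e et
    by (simp add: Z_def transpose_kron kron_one_smult_one_inverse kron_one_mult_kron_one divide_inverse)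
  also have "\<dots> = kron ?I ((1 / real m) \<cdot>\<^sub>m (?e * transpose_mat ?e))"
    using mult_smult_one_mult[OF e et] by simp
  finally have projection: "Z * mat_inv (transpose_mat Z * Z) * transpose_mat Z =
      kron ?I ((1 / real m) \<cdot>\<^sub>m (?e * transpose_mat ?e))" .
  show "annihilator Z = kron ?I (1\<^sub>m m - (1 / real m) \<cdot>\<^sub>m (?e * transpose_mat ?e))"
    unfolding annihilator_def projection using e et
    by (simp add: Z_def kron_minus_right[of "1\<^sub>m m" m m] kron_one_one)
qed

lemma dummy_weighted_gram_invertible:
  fixes m n :: nat and Sigma :: "real mat"
  assumes Sig: "sym_pos_def m Sigma" and "0 < m"
  defines "Z \<equiv> kron (1\<^sub>m n) (ones_col m :: real mat)"
  shows "invertible_mat (transpose_mat Z * kron (1\<^sub>m n) (mat_inv Sigma) * Z)"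
proof -
  let ?e = "ones_col m :: real mat"
  have e: "?e \<in> carrier_mat m 1" and et: "transpose_mat ?e \<in> carrier_mat 1 m"
    by (simp_all add: ones_col_def)
  have S: "Sigma \<in> carrier_mat m m"
    using Sig unfolding sym_pos_def_def by simp
  have Si: "mat_inv Sigma \<in> carrier_mat m m"
    using invertible_mat_inv[OF sym_pos_def_invertible[OF Sig] S] by simp
  define c where "c = (transpose_mat ?e * mat_inv Sigma * ?e) $$ (0, 0)"
  have one: "col ?e 0 $ 0 = 1" and zero: "0\<^sub>v m $ 0 = (0 :: real)"
    using \<open>0 < m\<close> by (simp_all add: ones_col_def)
  have "col ?e 0 \<noteq> 0\<^sub>v m"
  proof
    assume "col ?e 0 = 0\<^sub>v m"
    with one zero show False
      by (simp only:)
  qed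
  moreover have "col ?e 0 \<in> carrier_vec m"
    by (rule col_carrier_vec[OF _ e]) simp
  ultimately have "c > 0"
    unfolding c_def quadratic_form_index[OF e Si] by (rule sym_pos_def_mat_inv_pos[OF Sig, rotated])
  have "transpose_mat ?e * mat_inv Sigma * ?e = c \<cdot>\<^sub>m 1\<^sub>m 1"
    unfolding c_def using e et Si by (intro mat_1x1_eq_smult_one) auto
  then have "transpose_mat Z * kron (1\<^sub>m n) (mat_inv Sigma) * Z = kron (1\<^sub>m n) (c \<cdot>\<^sub>m 1\<^sub>m 1)"
    unfolding Z_def transpose_kron using e et Si by (simp add: kron_one_mult_kron_one)
  with \<open>c > 0\<close> show ?thesis
    by (simp only: kron_one_smult_one_inverse(1))
qed

lemma fixed_effects_GLS_weight:
  fixes m n :: nat and Sigma :: "real mat"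
  assumes Sig: "sym_pos_def m Sigma" and "0 < m"
  defines "Z \<equiv> kron (1\<^sub>m n) (ones_col m)"
    and "W \<equiv> kron (1\<^sub>m n) (mat_inv Sigma)"
    and "Mm \<equiv> 1\<^sub>m m - (1 / real m) \<cdot>\<^sub>m (ones_col m * transpose_mat (ones_col m))"
  defines "M \<equiv> kron (1\<^sub>m n) Mm"
    and "P \<equiv> W * (1\<^sub>m (m * n) - Z * mat_inv (transpose_mat Z * W * Z) * transpose_mat Z * W)"
  shows "MP_inverse (kron (1\<^sub>m n) (Mm * Sigma * Mm)) = P" and "M * P = P" and "P * M = P"
    and "M \<in> carrier_mat (m * n) (m * n)" and "P \<in> carrier_mat (m * n) (m * n)"
proof -
  have S: "Sigma \<in> carrier_mat m m"
    using Sig unfolding sym_pos_def_def by simp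
  note Si = invertible_mat_inv[OF sym_pos_def_invertible[OF Sig] S]
  define V where "V = kron (1\<^sub>m n) Sigma"
  have V: "V \<in> carrier_mat (m * n) (m * n)" and W: "W \<in> carrier_mat (m * n) (m * n)"
    unfolding V_def W_def using kron_carrier_mat[OF one_carrier_mat S, of n]
      kron_carrier_mat[OF one_carrier_mat Si(1), of n] by (simp_all add: mult.commute)
  have VW: "V * W = 1\<^sub>m (m * n)"
    unfolding V_def W_def using S Si by (simp add: kron_one_mult_kron_one kron_one_one mult.commute)
  have Z: "Z \<in> carrier_mat (m * n) n"
    unfolding Z_def using kron_carrier_mat[of "1\<^sub>m n" n n "ones_col m" m 1]
    by (simp add: ones_col_def mult.commute)
  have Mm: "Mm \<in> carrier_mat m m"
    unfolding Mm_def
    by (intro minus_carrier_mat smult_carrier_mat mult_carrier_mat[of _ m 1]) (simp_all add: ones_col_def)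
  have M_eq: "M = annihilator Z"
    unfolding M_def Mm_def Z_def using dummy_annihilator(2)[OF \<open>0 < m\<close>] by simp
  have P_eq: "P = GLS_weight W Z"
    unfolding P_def GLS_weight_def using Z by simp
  have dispersion: "kron (1\<^sub>m n) (Mm * Sigma * Mm) = M * V * M"
    unfolding M_def V_def using Mm S by (simp add: kron_one_mult_kron_one)
  note gram = dummy_annihilator(1)[OF \<open>0 < m\<close>, of n, folded Z_def]
    and weighted_gram = dummy_weighted_gram_invertible[OF Sig \<open>0 < m\<close>, of n, folded Z_def W_def]
  note GLS = GLS_weight_MP_inverse[OF V W VW Z gram weighted_gram, folded M_eq P_eq]
  show "MP_inverse (kron (1\<^sub>m n) (Mm * Sigma * Mm)) = P"
    unfolding dispersion by (rule MP_inverse_eqI[OF GLS(1)])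
  show "M * P = P" and "P * M = P"
    by (fact GLS(2,3))+
  show "M \<in> carrier_mat (m * n) (m * n)" and "P \<in> carrier_mat (m * n) (m * n)"
    unfolding M_eq P_eq
    by (fact annihilator_carrier[OF Z gram] GLS_weight_carrier[OF V W VW Z weighted_gram])+
qed

theorem theorem5:
  fixes n m K :: nat and X Sigma :: "real mat" and y :: "real vec"
  assumes "n \<ge> 2" and "m \<ge> 2" and "K \<ge> 1"
    and X: "X \<in> carrier_mat (m * n) K"
    and Sig: "sym_pos_def m Sigma"
    and y: "y \<in> carrier_vec (m * n)"
  defines "Z \<equiv> kron (1\<^sub>m n) (ones_col m)"
    and "W \<equiv> kron (1\<^sub>m n) (mat_inv Sigma)"
    and "Mm \<equiv> 1\<^sub>m m - (1 / real m) \<cdot>\<^sub>m (ones_col m * transpose_mat (ones_col m))"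
  defines "Q \<equiv> Z * mat_inv (transpose_mat Z * W * Z) * transpose_mat Z * W"
    and "M \<equiv> kron (1\<^sub>m n) Mm"
    and "Dplus \<equiv> MP_inverse (kron (1\<^sub>m n) (Mm * Sigma * Mm))"
  defines "P \<equiv> W * (1\<^sub>m (m * n) - Q)"
    and "Cplus \<equiv> transpose_mat X * M * Dplus * M * X"
  assumes "invertible_mat (transpose_mat X * P * X)"
    and "invertible_mat Cplus"
  shows "mat_inv Cplus *\<^sub>v ((transpose_mat X * M * Dplus) *\<^sub>v y)
       = mat_inv (transpose_mat X * P * X) *\<^sub>v ((transpose_mat X * P) *\<^sub>v y)"
proof -
  have "0 < m"
    using \<open>m \<ge> 2\<close> by simp
  have "Dplus = P" and MP: "M * P = P" and PM: "P * M = P"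
    and M: "M \<in> carrier_mat (m * n) (m * n)" and P: "P \<in> carrier_mat (m * n) (m * n)"
    unfolding Dplus_def P_def Q_def M_def Mm_def W_def Z_def
    by (rule fixed_effects_GLS_weight[OF Sig \<open>0 < m\<close>])+
  have Xt: "transpose_mat X \<in> carrier_mat K (m * n)"
    using X by simp
  have XtMD: "transpose_mat X * M * Dplus = transpose_mat X * P"
    unfolding \<open>Dplus = P\<close> assoc_mult_mat[OF Xt M P] MP ..
  have "Cplus = transpose_mat X * (P * M) * X"
    unfolding Cplus_def XtMD assoc_mult_mat[OF Xt P M] ..
  then have "Cplus = transpose_mat X * P * X"
    unfolding PM .
  then show ?thesis
    unfolding XtMD by simp
qed

end
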